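(* Let $N$ be a finite abelian group, $F$ a finite field, $R=F[N]$, and let $A\in R^{r_A\times n_A}$, $B\in R^{r_B\times n_B}$. Suppose the $F$-linear classical codes $C_A^\perp=\ker\boldsymbol A$ and $C_B^\perp=\ker\boldsymbol B$ are both zero. Then the quasi-abelian LP code $\mathrm{LP}[A,B]$ is trivial, i.e., has dimension $0$.
   Context: For $x\in R=F[N]$, $\mathrm L_N(x)$ is the $|N|\times|N|$ matrix $[\mathrm L_N(x)]_{\alpha,\beta}=\sum_g x_g\delta_{\alpha,g\beta}$. For a matrix $X$ over $R$, $\boldsymbol X$ denotes the matrix over $F$ obtained by replacing every entry $x$ by the block $\mathrm L_N(x)$; $\ker\boldsymbol X$ is its null space (vectors $u$ with $\boldsymbol Xu=0$). The LP code $\mathrm{LP}[A,B]$ is the CSS code over $F$ with $\boldsymbol H_X=\boldsymbol{\bigl(A\otimes I_{r_B}\ \ I_{r_A}\otimes B\bigr)}$ and $\boldsymbol H_Z=\Bigl(\boldsymbol{\begin{pmatrix}I_{n_A}\otimes B\\ -A\otimes I_{n_B}\end{pmatrix}}\Bigr)^T$, where $I_m$ is the $m\times m$ identity over $R$ and $\otimes$ is the Kronecker product over the commutative ring $R$; its dimension is $n-\mathrm{rank}\boldsymbol H_X-\mathrm{rank}\boldsymbol H_Z$ with $n=|N|(n_Ar_B+r_An_B)$. *)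

theory Defs
  imports "HOL-Library.Cardinality" "Jordan_Normal_Form.DL_Rank" "Jordan_Normal_Form.Matrix_Kernel"
begin

text \<open>The finite abelian group N is a finite type of class ab_group_add (written additively),
  the finite field F is a finite type of class field. An element x of the group algebra
  R = F[N] is a function N \<Rightarrow> F (x g = coefficient of g).\<close>

type_synonym ('f, 'n) grpalg = "'n \<Rightarrow> 'f"

definition ga_zero :: "('f::field, 'n::{finite,ab_group_add}) grpalg" where
  "ga_zero = (\<lambda>g. 0)"

definition ga_one :: "('f::field, 'n::{finite,ab_group_add}) grpalg" where
  "ga_one = (\<lambda>g. if g = 0 then 1 else 0)"

definition ga_mult :: "('f::field, 'n::{finite,ab_group_add}) grpalg \<Rightarrow> ('f, 'n) grpalg \<Rightarrow> ('f, 'n) grpalg" where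
  "ga_mult x y = (\<lambda>g. \<Sum>h\<in>UNIV. x h * y (g - h))"

definition ga_uminus :: "('f::field, 'n::{finite,ab_group_add}) grpalg \<Rightarrow> ('f, 'n) grpalg" where
  "ga_uminus x = (\<lambda>g. - x g)"

definition ga_id :: "nat \<Rightarrow> ('f::field, 'n::{finite,ab_group_add}) grpalg mat" where
  "ga_id m = mat m m (\<lambda>(i,j). if i = j then ga_one else ga_zero)"

definition ga_kron :: "('f::field, 'n::{finite,ab_group_add}) grpalg mat \<Rightarrow> ('f, 'n) grpalg mat \<Rightarrow> ('f, 'n) grpalg mat" where
  "ga_kron X Y = mat (dim_row X * dim_row Y) (dim_col X * dim_col Y)
     (\<lambda>(i,j). ga_mult (X $$ (i div dim_row Y, j div dim_col Y)) (Y $$ (i mod dim_row Y, j mod dim_col Y)))"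

definition ga_neg_mat :: "('f::field, 'n::{finite,ab_group_add}) grpalg mat \<Rightarrow> ('f, 'n) grpalg mat" where
  "ga_neg_mat X = map_mat ga_uminus X"

definition hcat :: "'a mat \<Rightarrow> 'a mat \<Rightarrow> 'a mat" where
  "hcat X Y = mat (dim_row X) (dim_col X + dim_col Y)
     (\<lambda>(i,j). if j < dim_col X then X $$ (i,j) else Y $$ (i, j - dim_col X))"

definition vcat :: "'a mat \<Rightarrow> 'a mat \<Rightarrow> 'a mat" where
  "vcat X Y = mat (dim_row X + dim_row Y) (dim_col X)
     (\<lambda>(i,j). if i < dim_row X then X $$ (i,j) else Y $$ (i - dim_row X, j))"

text \<open>A fixed enumeration of the group N (the rank is independent of its choice).\<close>
definition grp_enum :: "'n::finite list" where
  "grp_enum = (SOME xs. distinct xs \<and> set xs = UNIV)"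

definition L_N :: "('f::field, 'n::{finite,ab_group_add}) grpalg \<Rightarrow> 'f mat" where
  "L_N x = mat (CARD('n)) (CARD('n))
     (\<lambda>(a,b). \<Sum>g\<in>UNIV. x g * (if grp_enum ! a = g + grp_enum ! b then 1 else 0))"

text \<open>Bold X: replace every entry x by the block L_N(x).\<close>
definition lift_mat :: "('f::field, 'n::{finite,ab_group_add}) grpalg mat \<Rightarrow> 'f mat" where
  "lift_mat X = mat (dim_row X * CARD('n)) (dim_col X * CARD('n))
     (\<lambda>(i,j). L_N (X $$ (i div CARD('n), j div CARD('n))) $$ (i mod CARD('n), j mod CARD('n)))"

definition frank :: "'f::field mat \<Rightarrow> nat" where
  "frank M = vec_space.rank (dim_row M) M"

definition LP_HX :: "('f::field, 'n::{finite,ab_group_add}) grpalg mat \<Rightarrow> ('f, 'n) grpalg mat \<Rightarrow> 'f mat" where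
  "LP_HX A B = lift_mat (hcat (ga_kron A (ga_id (dim_row B))) (ga_kron (ga_id (dim_row A)) B))"

definition LP_HZ :: "('f::field, 'n::{finite,ab_group_add}) grpalg mat \<Rightarrow> ('f, 'n) grpalg mat \<Rightarrow> 'f mat" where
  "LP_HZ A B = transpose_mat (lift_mat (vcat (ga_kron (ga_id (dim_col A)) B)
                                            (ga_neg_mat (ga_kron A (ga_id (dim_col B))))))"

text \<open>Dimension of the CSS code LP[A,B] (as an integer, to avoid truncated subtraction).\<close>
definition LP_dim :: "('f::field, 'n::{finite,ab_group_add}) grpalg mat \<Rightarrow> ('f, 'n) grpalg mat \<Rightarrow> int" where
  "LP_dim A B = int (CARD('n) * (dim_col A * dim_row B + dim_row A * dim_col B))
                - int (frank (LP_HX A B)) - int (frank (LP_HZ A B))"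

end

theory Submission
  imports Defs
begin

text \<open>
  Over the commutative ring \<open>R = F[N]\<close> both check matrices come from the complex
  \<open>R^(nA nB) \<rightarrow> R^(nA rB + rA nB) \<rightarrow> R^(rA rB)\<close> with maps \<open>D = (I \<otimes> B; -A \<otimes> I)\<close> and
  \<open>E = (A \<otimes> I | I \<otimes> B)\<close>: \<open>H\<^sub>X\<close> is the lift of \<open>E\<close> and \<open>H\<^sub>Z\<close> the transpose of the lift of \<open>D\<close>.
  Lifting an \<open>R\<close>-matrix to its block matrix of regular representations is compatible with
  multiplication, so kernels and images over \<open>R\<close> and over \<open>F\<close> correspond.  Hence \<open>A\<close> is injective
  over \<open>R\<close>.  A left inverse of the lift of \<open>B\<close> over \<open>F\<close>, transposed, shows that the conjugate
  transpose of \<open>B\<close> (conjugation being \<open>g \<mapsto> -g\<close>) is surjective, which gives a left inverse \<open>Q\<close> of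
  \<open>B\<close> over \<open>R\<close>.  Reading vectors as matrices, \<open>E (U, V) = A U + V B\<^sup>T\<close>; when this vanishes,
  \<open>W = U Q\<^sup>T\<close> satisfies \<open>V = -A W\<close> and, as \<open>A\<close> is injective, \<open>U = W B\<^sup>T\<close>, so \<open>(U, V) = D W\<close>.
  Thus the complex is exact with \<open>D\<close> injective, and rank-nullity gives \<open>rank H\<^sub>X + rank H\<^sub>Z = n\<close>.
\<close>

lemma mult_add_less_mult: "i < r \<Longrightarrow> j < c \<Longrightarrow> i * c + j < r * (c::nat)"
proof -
  assume "i < r" "j < c"
  then have "i * c + j < Suc i * c" by simp
  also have "\<dots> \<le> r * c" using \<open>i < r\<close> by (intro mult_le_mono1) simp
  finally show ?thesis .
qed

lemma less_mult_obtain_div_mod: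
  assumes "s < c * (N :: nat)"
  obtains i a where "s = i * N + a" "i < c" "a < N"
proof
  show "s = s div N * N + s mod N" by simp
  show "s div N < c" using assms by (simp add: less_mult_imp_div_less)
  show "s mod N < N" using assms by (cases N) auto
qed

lemma sum_lessThan_mult:
  fixes f :: "nat \<Rightarrow> 'a::comm_monoid_add"
  shows "(\<Sum>t<c * N. f t) = (\<Sum>j<c. \<Sum>b<N. f (j * N + b))"
proof -
  have "(\<Sum>t<c * N. f t) = (\<Sum>j<c. sum f {j * N..<j * N + N})"
    using sum.nat_group[of f N c] by simp
  also have "\<dots> = (\<Sum>j<c. \<Sum>b<N. f (j * N + b))"
  proof (rule sum.cong[OF refl])
    fix j
    show "sum f {j * N..<j * N + N} = (\<Sum>b<N. f (j * N + b))"
      using sum.shift_bounds_nat_ivl[of f 0 "j * N" N] by (simp add: atLeast0LessThan add.commute)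
  qed
  finally show ?thesis .
qed

definition mat_range :: "'a::semiring_0 mat \<Rightarrow> 'a vec set" where
  "mat_range M = (\<lambda>v. M *\<^sub>v v) ` carrier_vec (dim_col M)"

lemma mat_range_carrier: "M \<in> carrier_mat r c \<Longrightarrow> mat_range M \<subseteq> carrier_vec r"
  unfolding mat_range_def by auto

lemma mat_kernel_trivial_iff:
  "M \<in> carrier_mat m n \<Longrightarrow>
    mat_kernel M = {0\<^sub>v n} \<longleftrightarrow> (\<forall>z\<in>carrier_vec n. M *\<^sub>v z = 0\<^sub>v m \<longrightarrow> z = 0\<^sub>v n)"
  unfolding mat_kernel_def by auto

lemma mat_range_eq_carrier_of_right_inverse:
  assumes M: "M \<in> carrier_mat m n" and Z: "Z \<in> carrier_mat n m" and "M * Z = 1\<^sub>m m"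
  shows "mat_range (M :: 'a::semiring_1 mat) = carrier_vec m"
proof
  show "mat_range M \<subseteq> carrier_vec m" using mat_range_carrier[OF M] .
  show "carrier_vec m \<subseteq> mat_range M"
  proof
    fix y :: "'a vec" assume y: "y \<in> carrier_vec m"
    have "M *\<^sub>v (Z *\<^sub>v y) = (M * Z) *\<^sub>v y"
      using M Z y by (simp add: assoc_mult_mat_vec)
    then have "M *\<^sub>v (Z *\<^sub>v y) = y"
      using assms(3) y by simp
    then show "y \<in> mat_range M"
      using M Z y unfolding mat_range_def by (intro image_eqI[of _ _ "Z *\<^sub>v y"]) auto
  qed
qed

lemma right_inverse_of_mat_range:
  fixes M :: "'a::semiring_1 mat"
  assumes M: "M \<in> carrier_mat m n" and surj: "mat_range M = carrier_vec m"
  obtains Z where "Z \<in> carrier_mat n m" "M * Z = 1\<^sub>m m"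
proof -
  have "\<exists>x. x \<in> carrier_vec n \<and> M *\<^sub>v x = unit_vec m j" if "j < m" for j
  proof -
    have "unit_vec m j \<in> mat_range M" using surj by simp
    then show ?thesis using M unfolding mat_range_def by auto
  qed
  then obtain x where x: "\<And>j. j < m \<Longrightarrow> x j \<in> carrier_vec n \<and> M *\<^sub>v x j = unit_vec m j"
    by metis
  define Z where "Z = mat_of_cols n (map x [0..<m])"
  have Z: "Z \<in> carrier_mat n m" unfolding Z_def using mat_of_cols_carrier(1)[of n "map x [0..<m]"] by simp
  have "M * Z = 1\<^sub>m m"
  proof (rule eq_matI)
    fix i j assume "i < dim_row (1\<^sub>m m :: 'a mat)" "j < dim_col (1\<^sub>m m :: 'a mat)"
    then have i: "i < m" and j: "j < m" by auto
    have "(M * Z) $$ (i, j) = row M i \<bullet> x j"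
      using M i j x[OF j] by (simp add: Z_def)
    also have "\<dots> = (M *\<^sub>v x j) $ i" using M i by simp
    also have "\<dots> = 1\<^sub>m m $$ (i, j)" using x[OF j] i j by simp
    finally show "(M * Z) $$ (i, j) = 1\<^sub>m m $$ (i, j)" .
  qed (use M Z in simp_all)
  with Z show ?thesis by (rule that)
qed

lemma mat_mult_left_cancel:
  fixes A :: "'a::comm_ring_1 mat"
  assumes A: "A \<in> carrier_mat p a" and A_inj: "mat_kernel A = {0\<^sub>v a}"
    and Z1: "Z1 \<in> carrier_mat a c" and Z2: "Z2 \<in> carrier_mat a c" and eq: "A * Z1 = A * Z2"
  shows "Z1 = Z2"
proof (rule eq_matI)
  fix i j assume i: "i < dim_row Z2" and "j < dim_col Z2"
  then have j: "j < c" using Z2 by simp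
  have cols: "col Z1 j \<in> carrier_vec a" "col Z2 j \<in> carrier_vec a" using Z1 Z2 by auto
  have "A *\<^sub>v (col Z1 j - col Z2 j) = col (A * Z1) j - col (A * Z2) j"
    using A cols unfolding col_mult2[OF A Z1 j] col_mult2[OF A Z2 j] by (rule mult_minus_distrib_mat_vec)
  also have "\<dots> = 0\<^sub>v p" unfolding eq col_mult2[OF A Z2 j] using A cols by simp
  finally have "col Z1 j - col Z2 j \<in> mat_kernel A"
    using A cols by (intro mat_kernelI) auto
  then have "col Z1 j - col Z2 j = 0\<^sub>v a" using A_inj by simp
  then have "col Z1 j $ i - col Z2 j $ i = 0"
    using i Z2 cols by (metis carrier_vecD index_minus_vec(1) index_zero_vec(1) carrier_matD(1))
  then show "Z1 $$ (i, j) = Z2 $$ (i, j)" using i j Z1 Z2 by simp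
qed (use Z1 Z2 in auto)

lemma add_eq_zero_mat_imp_eq_uminus:
  assumes "X \<in> carrier_mat r c" "Y \<in> carrier_mat r c" "X + Y = 0\<^sub>m r c"
  shows "Y = - (X :: 'a::ab_group_add mat)"
proof (rule eq_matI)
  fix i j assume ij: "i < dim_row (- X)" "j < dim_col (- X)"
  have "(X + Y) $$ (i, j) = (0\<^sub>m r c :: 'a mat) $$ (i, j)" by (simp only: assms(3))
  moreover have "dim_row X = r" "dim_col X = c" "dim_row Y = r" "dim_col Y = c" using assms by auto
  ultimately have "X $$ (i, j) + Y $$ (i, j) = 0" using ij by simp
  then show "Y $$ (i, j) = (- X) $$ (i, j)"
    using assms ij by (simp add: eq_neg_iff_add_eq_0 add.commute)
qed (use assms in auto)

section \<open>The group algebra as a commutative ring\<close>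

lemma sum_UNIV_shift: "(\<Sum>h\<in>(UNIV::'n::{finite,ab_group_add} set). f (h + c)) = sum f UNIV"
  by (rule sum.reindex_bij_witness[where i="\<lambda>h. h - c" and j="\<lambda>h. h + c"]) auto

lemma sum_UNIV_reflect: "(\<Sum>h\<in>(UNIV::'n::{finite,ab_group_add} set). f (c - h)) = sum f UNIV"
  by (rule sum.reindex_bij_witness[where i="\<lambda>h. c - h" and j="\<lambda>h. c - h"]) auto

lemma ga_mult_comm: "ga_mult x y = ga_mult y (x::('f::field,'n::{finite,ab_group_add}) grpalg)"
proof
  fix g
  have "ga_mult x y g = (\<Sum>h\<in>UNIV. x (g - h) * y (g - (g - h)))"
    unfolding ga_mult_def by (rule sum_UNIV_reflect[symmetric, where f="\<lambda>h. x h * y (g - h)"])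
  then show "ga_mult x y g = ga_mult y x g" unfolding ga_mult_def by (simp add: mult.commute)
qed

lemma ga_mult_assoc:
  "ga_mult (ga_mult x y) z = ga_mult x (ga_mult y (z::('f::field,'n::{finite,ab_group_add}) grpalg))"
proof
  fix g
  have "ga_mult (ga_mult x y) z g = (\<Sum>h\<in>UNIV. \<Sum>k\<in>UNIV. x k * y (h - k) * z (g - h))"
    unfolding ga_mult_def by (simp add: sum_distrib_right)
  also have "\<dots> = (\<Sum>k\<in>UNIV. \<Sum>h\<in>UNIV. x k * (y (h - k) * z (g - h)))"
    by (subst sum.swap) (simp add: mult.assoc)
  also have "\<dots> = (\<Sum>k\<in>UNIV. \<Sum>m\<in>UNIV. x k * (y m * z (g - k - m)))"
  proof (rule sum.cong[OF refl])
    fix k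
    show "(\<Sum>h\<in>UNIV. x k * (y (h - k) * z (g - h))) = (\<Sum>m\<in>UNIV. x k * (y m * z (g - k - m)))"
      using sum_UNIV_shift[where c=k and f="\<lambda>h. x k * (y (h - k) * z (g - h))"]
      by (simp add: algebra_simps)
  qed
  also have "\<dots> = ga_mult x (ga_mult y z) g" unfolding ga_mult_def by (simp add: sum_distrib_left)
  finally show "ga_mult (ga_mult x y) z g = ga_mult x (ga_mult y z) g" .
qed

lemma ga_mult_one_left: "ga_mult ga_one x = (x::('f::field,'n::{finite,ab_group_add}) grpalg)"
proof
  fix g
  have "ga_mult ga_one x g = (\<Sum>h\<in>UNIV. if h = 0 then x (g - h) else 0)"
    unfolding ga_mult_def ga_one_def by (rule sum.cong) auto
  then show "ga_mult ga_one x g = x g" by (simp add: sum.delta)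
qed

lemma ga_mult_add_left: "ga_mult (\<lambda>g. x g + y g) z = (\<lambda>g. ga_mult x z g + ga_mult y z g)"
  unfolding ga_mult_def by (auto simp: algebra_simps sum.distrib)

datatype ('f, 'n) group_ring = GR (gr_coeff: "'n \<Rightarrow> 'f")

instantiation group_ring :: (field, "{finite,ab_group_add}") comm_ring_1
begin
definition zero_group_ring_def: "0 = GR (\<lambda>g. 0)"
definition one_group_ring_def: "1 = GR ga_one"
definition plus_group_ring_def: "x + y = GR (\<lambda>g. gr_coeff x g + gr_coeff y g)"
definition uminus_group_ring_def: "- x = GR (\<lambda>g. - gr_coeff x g)"
definition minus_group_ring_def: "x - y = GR (\<lambda>g. gr_coeff x g - gr_coeff y g)"
definition times_group_ring_def: "x * y = GR (ga_mult (gr_coeff x) (gr_coeff y))"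
instance
proof
  fix a b c :: "('a,'b) group_ring"
  show "a * b * c = a * (b * c)" by (simp add: times_group_ring_def ga_mult_assoc)
  show "a * b = b * a" by (simp add: times_group_ring_def ga_mult_comm)
  show "1 * a = a" by (simp add: times_group_ring_def one_group_ring_def ga_mult_one_left)
  show "(a + b) * c = a * c + b * c"
    by (simp add: times_group_ring_def plus_group_ring_def ga_mult_add_left)
  show "a + b + c = a + (b + c)" by (simp add: plus_group_ring_def algebra_simps)
  show "a + b = b + a" by (simp add: plus_group_ring_def algebra_simps)
  show "0 + a = a" by (simp add: plus_group_ring_def zero_group_ring_def)
  show "- a + a = 0" by (simp add: plus_group_ring_def zero_group_ring_def uminus_group_ring_def)
  show "a - b = a + - b" by (simp add: plus_group_ring_def minus_group_ring_def uminus_group_ring_def)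
  show "(0::('a,'b) group_ring) \<noteq> 1"
    by (auto simp: zero_group_ring_def one_group_ring_def ga_one_def fun_eq_iff)
qed
end

lemma gr_coeff_sum: "gr_coeff (sum f S) g = (\<Sum>s\<in>S. gr_coeff (f s) g)"
  by (induction S rule: infinite_finite_induct) (auto simp: zero_group_ring_def plus_group_ring_def)

definition gr_conj :: "('f::field, 'n::{finite,ab_group_add}) group_ring \<Rightarrow> ('f, 'n) group_ring" where
  "gr_conj x = GR (\<lambda>g. gr_coeff x (- g))"

lemma gr_conj_conj[simp]: "gr_conj (gr_conj x) = x"
  by (simp add: gr_conj_def)

lemma gr_conj_mult: "gr_conj (x * y) = gr_conj x * gr_conj y"
proof -
  have "ga_mult (gr_coeff x) (gr_coeff y) (- g) = ga_mult (\<lambda>g. gr_coeff x (- g)) (\<lambda>g. gr_coeff y (- g)) g" for g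
    unfolding ga_mult_def
    by (rule sum.reindex_bij_witness[where i="\<lambda>h. - h" and j="\<lambda>h. - h"]) (simp_all add: minus_diff_commute)
  then show ?thesis by (simp add: gr_conj_def times_group_ring_def)
qed

lemma gr_conj_zero[simp]: "gr_conj 0 = 0"
  by (simp add: gr_conj_def zero_group_ring_def)

lemma gr_conj_one[simp]: "gr_conj 1 = 1"
  by (simp add: gr_conj_def one_group_ring_def ga_one_def)

lemma gr_conj_add: "gr_conj (x + y) = gr_conj x + gr_conj y"
  by (simp add: gr_conj_def plus_group_ring_def)

lemma gr_conj_sum: "gr_conj (sum f S) = (\<Sum>s\<in>S. gr_conj (f s))"
  by (induction S rule: infinite_finite_induct) (auto simp: gr_conj_add)

section \<open>The regular representation\<close>

lemma grp_enum_distinct: "distinct (grp_enum :: 'n::finite list)"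
  and grp_enum_set: "set (grp_enum :: 'n list) = UNIV"
  and length_grp_enum: "length (grp_enum :: 'n list) = CARD('n)"
proof -
  have "\<exists>xs::'n list. distinct xs \<and> set xs = UNIV"
    using finite_distinct_list[of "UNIV::'n set"] by auto
  then have "distinct (grp_enum::'n list) \<and> set (grp_enum::'n list) = UNIV"
    unfolding grp_enum_def by (rule someI_ex)
  then show "distinct (grp_enum::'n list)" "set (grp_enum::'n list) = UNIV" by auto
  then show "length (grp_enum::'n list) = CARD('n)" by (metis distinct_card)
qed

lemma bij_betw_grp_enum: "bij_betw ((!) grp_enum) {..<CARD('n)} (UNIV :: 'n::finite set)"
  by (rule bij_betw_nth) (auto simp: grp_enum_distinct grp_enum_set length_grp_enum)

definition grp_index :: "'n::finite \<Rightarrow> nat" where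
  "grp_index = the_inv_into {..<CARD('n)} ((!) grp_enum)"

lemma grp_index_less: "grp_index (g::'n::finite) < CARD('n)"
  and grp_enum_grp_index[simp]: "grp_enum ! grp_index g = g"
  using bij_betw_the_inv_into[OF bij_betw_grp_enum] f_the_inv_into_f_bij_betw[OF bij_betw_grp_enum]
  unfolding grp_index_def by (auto simp: bij_betw_def)

lemma grp_index_grp_enum[simp]: "p < CARD('n) \<Longrightarrow> grp_index ((grp_enum :: 'n::finite list) ! p) = p"
  unfolding grp_index_def by (rule the_inv_into_f_f) (use bij_betw_grp_enum in \<open>auto simp: bij_betw_def\<close>)

lemma sum_grp_enum: "(\<Sum>b<CARD('n). f ((grp_enum :: 'n::finite list) ! b)) = (\<Sum>h\<in>UNIV. f h)"
  using bij_betw_grp_enum by (rule sum.reindex_bij_betw)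

definition flatten_vec :: "('f::field, 'n::{finite,ab_group_add}) group_ring vec \<Rightarrow> 'f vec" where
  "flatten_vec y = vec (dim_vec y * CARD('n))
     (\<lambda>i. gr_coeff (y $ (i div CARD('n))) (grp_enum ! (i mod CARD('n))))"

definition unflatten_vec :: "nat \<Rightarrow> 'f vec \<Rightarrow> ('f::field, 'n::{finite,ab_group_add}) group_ring vec" where
  "unflatten_vec k v = vec k (\<lambda>j. GR (\<lambda>g. v $ (j * CARD('n) + grp_index g)))"

lemma dim_flatten_vec[simp]:
  "dim_vec (flatten_vec (y :: ('f::field, 'n::{finite,ab_group_add}) group_ring vec)) = dim_vec y * CARD('n)"
  unfolding flatten_vec_def by (rule dim_vec)

lemma flatten_vec_carrier:
  "y \<in> carrier_vec k \<Longrightarrow>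
    flatten_vec (y :: ('f::field, 'n::{finite,ab_group_add}) group_ring vec) \<in> carrier_vec (k * CARD('n))"
  by (simp only: carrier_vec_def mem_Collect_eq dim_flatten_vec)

lemma unflatten_vec_carrier[simp]: "unflatten_vec k v \<in> carrier_vec k"
  unfolding unflatten_vec_def by (rule vec_carrier)

lemma index_flatten_vec:
  assumes "j < dim_vec y" "b < CARD('n)"
  shows "flatten_vec (y :: ('f::field, 'n::{finite,ab_group_add}) group_ring vec) $ (j * CARD('n) + b)
    = gr_coeff (y $ j) (grp_enum ! b)"
  using assms mult_add_less_mult[OF assms] by (simp add: flatten_vec_def)

lemma flatten_unflatten_vec:
  assumes "v \<in> carrier_vec (k * CARD('n::{finite,ab_group_add}))"
  shows "flatten_vec (unflatten_vec k v :: ('f::field, 'n) group_ring vec) = v"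
proof (rule eq_vecI)
  fix i assume "i < dim_vec v"
  then have "i < k * CARD('n)" using assms by simp
  then show "flatten_vec (unflatten_vec k v :: ('f, 'n) group_ring vec) $ i = v $ i"
    by (simp add: flatten_vec_def unflatten_vec_def less_mult_imp_div_less)
qed (use assms in \<open>simp add: unflatten_vec_def\<close>)

lemma unflatten_flatten_vec:
  assumes "y \<in> carrier_vec k"
  shows "unflatten_vec k (flatten_vec y) = (y :: ('f::field, 'n::{finite,ab_group_add}) group_ring vec)"
proof (rule eq_vecI)
  fix j assume "j < dim_vec y"
  then show "unflatten_vec k (flatten_vec y) $ j = y $ j"
    using assms by (simp add: unflatten_vec_def index_flatten_vec grp_index_less group_ring.expand)
qed (use assms in \<open>simp add: unflatten_vec_def\<close>)

lemma bij_betw_flatten_vec: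
  "bij_betw (flatten_vec :: ('f::field, 'n::{finite,ab_group_add}) group_ring vec \<Rightarrow> _)
     (carrier_vec k) (carrier_vec (k * CARD('n)))"
  by (rule bij_betw_byWitness[where f'="unflatten_vec k"])
    (auto simp: flatten_unflatten_vec unflatten_flatten_vec flatten_vec_carrier)

lemma inj_on_flatten_vec:
  "inj_on (flatten_vec :: ('f::field, 'n::{finite,ab_group_add}) group_ring vec \<Rightarrow> _) (carrier_vec k)"
  using bij_betw_flatten_vec by (rule bij_betw_imp_inj_on)

lemma flatten_vec_zero[simp]:
  "flatten_vec (0\<^sub>v k :: ('f::field, 'n::{finite,ab_group_add}) group_ring vec) = 0\<^sub>v (k * CARD('n))"
  by (rule eq_vecI) (auto simp: flatten_vec_def zero_group_ring_def less_mult_imp_div_less)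

lemma flatten_vec_eqI:
  assumes "u \<in> carrier_vec (dim_vec y * CARD('n))"
    and "\<And>j b. j < dim_vec y \<Longrightarrow> b < CARD('n) \<Longrightarrow>
      u $ (j * CARD('n) + b) = gr_coeff (y $ j) (grp_enum ! b)"
  shows "u = flatten_vec (y :: ('f::field, 'n::{finite,ab_group_add}) group_ring vec)"
proof (rule eq_vecI)
  fix i assume "i < dim_vec (flatten_vec y)"
  then have "i div CARD('n) < dim_vec y" by (simp add: less_mult_imp_div_less)
  then show "u $ i = flatten_vec y $ i"
    using assms(2)[of "i div CARD('n)" "i mod CARD('n)"] index_flatten_vec[of "i div CARD('n)" y "i mod CARD('n)"]
    by simp
qed (use assms(1) in simp)

definition lift_gr :: "('f::field, 'n::{finite,ab_group_add}) group_ring mat \<Rightarrow> 'f mat" where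
  "lift_gr M = lift_mat (map_mat gr_coeff M)"

lemma lift_mat_eq_lift_gr: "lift_mat X = lift_gr (map_mat GR X)"
  unfolding lift_gr_def by (rule arg_cong[where f=lift_mat], rule eq_matI) auto

lemma lift_gr_carrier:
  "M \<in> carrier_mat r c \<Longrightarrow> lift_gr (M :: ('f::field, 'n::{finite,ab_group_add}) group_ring mat)
     \<in> carrier_mat (r * CARD('n)) (c * CARD('n))"
  unfolding lift_gr_def lift_mat_def by auto

lemma index_L_N:
  "a < CARD('n) \<Longrightarrow> b < CARD('n) \<Longrightarrow>
   L_N (x :: ('f::field, 'n::{finite,ab_group_add}) grpalg) $$ (a, b) = x (grp_enum ! a - grp_enum ! b)"
proof -
  assume ab: "a < CARD('n)" "b < CARD('n)"
  have "L_N x $$ (a, b) = (\<Sum>g\<in>UNIV. if g = grp_enum ! a - grp_enum ! b then x g else 0)"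
    unfolding L_N_def using ab by (auto intro!: sum.cong simp: algebra_simps)
  then show ?thesis by (simp add: sum.delta')
qed

lemma index_lift_gr:
  assumes "M \<in> carrier_mat r c" "i < r" "j < c" "a < CARD('n)" "b < CARD('n)"
  shows "lift_gr (M :: ('f::field, 'n::{finite,ab_group_add}) group_ring mat) $$ (i * CARD('n) + a, j * CARD('n) + b)
    = gr_coeff (M $$ (i, j)) (grp_enum ! a - grp_enum ! b)"
  using assms mult_add_less_mult[of i r a] mult_add_less_mult[of j c b]
  by (simp add: lift_gr_def lift_mat_def index_L_N)

lemma lift_gr_mult_flatten_vec:
  assumes M: "M \<in> carrier_mat r c" and y: "y \<in> carrier_vec c"
  shows "lift_gr M *\<^sub>v flatten_vec y = flatten_vec (M *\<^sub>v (y :: ('f::field, 'n::{finite,ab_group_add}) group_ring vec))"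
proof (rule flatten_vec_eqI)
  let ?N = "CARD('n)"
  show "lift_gr M *\<^sub>v flatten_vec y \<in> carrier_vec (dim_vec (M *\<^sub>v y) * ?N)"
    using mult_mat_vec_carrier[OF lift_gr_carrier[OF M] flatten_vec_carrier[OF y]] M by simp
  fix i a assume "i < dim_vec (M *\<^sub>v y)" "a < ?N"
  then have i: "i < r" and a: "a < ?N" using M by auto
  have "(lift_gr M *\<^sub>v flatten_vec y) $ (i * ?N + a)
      = (\<Sum>t<c * ?N. lift_gr M $$ (i * ?N + a, t) * flatten_vec y $ t)"
    using lift_gr_carrier[OF M] y mult_add_less_mult[OF i a]
    by (simp add: scalar_prod_def atLeast0LessThan)
  also have "\<dots> = (\<Sum>j<c. \<Sum>h\<in>UNIV. gr_coeff (M $$ (i, j)) (grp_enum ! a - h) * gr_coeff (y $ j) h)"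
    unfolding sum_lessThan_mult using M y i a
    by (simp add: index_lift_gr index_flatten_vec
        sum_grp_enum[where f="\<lambda>h. gr_coeff (M $$ (i, _)) (grp_enum ! a - h) * gr_coeff (y $ _) h"])
  also have "\<dots> = (\<Sum>j<c. gr_coeff (y $ j * M $$ (i, j)) (grp_enum ! a))"
    by (simp add: times_group_ring_def ga_mult_def mult.commute)
  also have "\<dots> = gr_coeff ((M *\<^sub>v y) $ i) (grp_enum ! a)"
    using M y i by (simp add: scalar_prod_def gr_coeff_sum atLeast0LessThan mult.commute)
  finally show "(lift_gr M *\<^sub>v flatten_vec y) $ (i * ?N + a) = gr_coeff ((M *\<^sub>v y) $ i) (grp_enum ! a)" .
qed

lemma flatten_vec_image_mat_range:
  assumes M: "M \<in> carrier_mat r (c :: nat)"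
  shows "flatten_vec ` mat_range M = mat_range (lift_gr (M :: ('f::field, 'n::{finite,ab_group_add}) group_ring mat))"
proof -
  have "mat_range (lift_gr M) = (\<lambda>u. lift_gr M *\<^sub>v u) ` flatten_vec ` (carrier_vec c :: ('f, 'n) group_ring vec set)"
    unfolding mat_range_def
    using lift_gr_carrier[OF M] bij_betw_imp_surj_on[OF bij_betw_flatten_vec[where 'f='f and 'n='n]] by simp
  also have "\<dots> = flatten_vec ` (\<lambda>y. M *\<^sub>v y) ` carrier_vec c"
    unfolding image_image using lift_gr_mult_flatten_vec[OF M] by (intro image_cong) auto
  finally show ?thesis using M unfolding mat_range_def by simp
qed

lemma flatten_vec_image_mat_kernel:
  assumes M: "M \<in> carrier_mat r c"
  shows "flatten_vec ` mat_kernel M = mat_kernel (lift_gr (M :: ('f::field, 'n::{finite,ab_group_add}) group_ring mat))"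
proof -
  have inj: "inj_on (flatten_vec :: ('f, 'n) group_ring vec \<Rightarrow> _) (carrier_vec r)"
    using bij_betw_flatten_vec by (rule bij_betw_imp_inj_on)
  have "flatten_vec y \<in> mat_kernel (lift_gr M) \<longleftrightarrow> y \<in> mat_kernel M" if y: "y \<in> carrier_vec c" for y
  proof -
    have "lift_gr M *\<^sub>v flatten_vec y = 0\<^sub>v (r * CARD('n))
        \<longleftrightarrow> flatten_vec (M *\<^sub>v y) = flatten_vec (0\<^sub>v r :: ('f, 'n) group_ring vec)"
      by (simp add: lift_gr_mult_flatten_vec[OF M y])
    also have "\<dots> \<longleftrightarrow> M *\<^sub>v y = 0\<^sub>v r"
      using inj_onD[OF inj] M y by auto
    finally show ?thesis
      using y M lift_gr_carrier[OF M] flatten_vec_carrier[OF y] by (auto simp: mat_kernel_def)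
  qed
  moreover have "mat_kernel (lift_gr M) \<subseteq> flatten_vec ` (carrier_vec c :: ('f, 'n) group_ring vec set)"
    using mat_kernel_carrier[OF lift_gr_carrier[OF M]] bij_betw_imp_surj_on[OF bij_betw_flatten_vec[where 'f='f and 'n='n]] by blast
  moreover have "mat_kernel M \<subseteq> carrier_vec c"
    using mat_kernel_carrier[OF M] .
  ultimately show ?thesis by blast
qed

lemma mat_kernel_lift_gr_trivial_iff:
  assumes M: "M \<in> carrier_mat r c"
  shows "mat_kernel (lift_gr M) = {0\<^sub>v (c * CARD('n))}
    \<longleftrightarrow> mat_kernel (M :: ('f::field, 'n::{finite,ab_group_add}) group_ring mat) = {0\<^sub>v c}"
proof -
  have "mat_kernel (lift_gr M) = {0\<^sub>v (c * CARD('n))}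
      \<longleftrightarrow> flatten_vec ` mat_kernel M = flatten_vec ` {0\<^sub>v c :: ('f, 'n) group_ring vec}"
    by (simp add: flatten_vec_image_mat_kernel[OF M])
  also have "\<dots> \<longleftrightarrow> mat_kernel M = {0\<^sub>v c}"
    by (rule inj_on_image_eq_iff[OF inj_on_flatten_vec]) (use mat_kernel_carrier[OF M] in auto)
  finally show ?thesis .
qed

lemma mat_kernel_lift_gr_eq_range:
  assumes "E \<in> carrier_mat p t" "D \<in> carrier_mat t k"
    and "mat_kernel E = mat_range (D :: ('f::field, 'n::{finite,ab_group_add}) group_ring mat)"
  shows "mat_kernel (lift_gr E) = mat_range (lift_gr D)"
  using assms flatten_vec_image_mat_kernel flatten_vec_image_mat_range by metis

lemma mat_range_eq_carrier_of_lift_gr: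
  assumes M: "M \<in> carrier_mat r c" and "mat_range (lift_gr M) = carrier_vec (r * CARD('n))"
  shows "mat_range (M :: ('f::field, 'n::{finite,ab_group_add}) group_ring mat) = carrier_vec r"
proof -
  have "flatten_vec ` mat_range M = flatten_vec ` (carrier_vec r :: ('f, 'n) group_ring vec set)"
    using assms flatten_vec_image_mat_range bij_betw_imp_surj_on[OF bij_betw_flatten_vec] by metis
  then show ?thesis
    using inj_on_image_eq_iff[OF inj_on_flatten_vec] mat_range_carrier[OF M] by blast
qed

section \<open>Linear algebra over a field\<close>

lemma mult_mat_vec_extend:
  fixes M :: "'a::comm_ring_1 mat"
  assumes M: "M \<in> carrier_mat m (Suc n)" and w: "w \<in> carrier_vec n"
  shows "M *\<^sub>v vec (Suc n) (\<lambda>j. if j < n then w $ j else a)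
    = mat m n (\<lambda>(i, j). M $$ (i, j)) *\<^sub>v w + a \<cdot>\<^sub>v col M n"
proof (rule eq_vecI)
  fix i assume "i < dim_vec (mat m n (\<lambda>(i, j). M $$ (i, j)) *\<^sub>v w + a \<cdot>\<^sub>v col M n)"
  then have i: "i < m" using M by simp
  have "(M *\<^sub>v vec (Suc n) (\<lambda>j. if j < n then w $ j else a)) $ i
      = (\<Sum>l<n. M $$ (i, l) * w $ l) + M $$ (i, n) * a"
    using M i by (simp add: scalar_prod_def atLeast0LessThan)
  then show "(M *\<^sub>v vec (Suc n) (\<lambda>j. if j < n then w $ j else a)) $ i
      = (mat m n (\<lambda>(i, j). M $$ (i, j)) *\<^sub>v w + a \<cdot>\<^sub>v col M n) $ i"
    using M w i by (simp add: scalar_prod_def atLeast0LessThan mult.commute)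
qed (use M in simp)

lemma separating_row_vec:
  fixes M' :: "'a::field mat"
  assumes M': "M' \<in> carrier_mat m n" and Z': "Z' \<in> carrier_mat n m" "Z' * M' = 1\<^sub>m n"
    and c: "c \<in> carrier_vec m" and c_new: "c \<noteq> M' *\<^sub>v (Z' *\<^sub>v c)"
  obtains \<phi> where "\<phi> \<in> carrier_vec m" "\<And>j. j < n \<Longrightarrow> \<phi> \<bullet> col M' j = 0" "\<phi> \<bullet> c = 1"
proof -
  define P where "P = 1\<^sub>m m - M' * Z'"
  have P: "P \<in> carrier_mat m m" unfolding P_def using M' Z' by (intro minus_carrier_mat) auto
  have PM': "P * M' = 0\<^sub>m m n"
  proof -
    have "P * M' = 1\<^sub>m m * M' - M' * Z' * M'"
      unfolding P_def using M' Z' by (intro minus_mult_distrib_mat) auto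
    also have "M' * Z' * M' = M'" using M' Z' by simp
    finally show ?thesis using M' by simp
  qed
  have Pc: "P *\<^sub>v c = c - M' *\<^sub>v (Z' *\<^sub>v c)"
  proof -
    have "P *\<^sub>v c = 1\<^sub>m m *\<^sub>v c - (M' * Z') *\<^sub>v c"
      unfolding P_def using M' Z' c by (intro minus_mult_distrib_mat_vec) auto
    also have "(M' * Z') *\<^sub>v c = M' *\<^sub>v (Z' *\<^sub>v c)" using M' Z' c by (simp add: assoc_mult_mat_vec)
    finally show ?thesis using c by simp
  qed
  \<comment> \<open>\<open>P\<close> projects away the column space of \<open>M'\<close>, and the new column survives it.\<close>
  obtain k where k: "k < m" "(P *\<^sub>v c) $ k \<noteq> 0"
  proof (rule ccontr)
    assume "\<not> thesis"
    then have "\<forall>k<m. c $ k - (M' *\<^sub>v (Z' *\<^sub>v c)) $ k = 0"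
      using that Pc M' Z' c by auto
    then have "c = M' *\<^sub>v (Z' *\<^sub>v c)" using M' c by (auto simp: vec_eq_iff)
    with c_new show False ..
  qed
  define \<phi> where "\<phi> = (1 / (P *\<^sub>v c) $ k) \<cdot>\<^sub>v row P k"
  show ?thesis
  proof
    show "\<phi> \<in> carrier_vec m" unfolding \<phi>_def using P k by simp
    show "\<phi> \<bullet> col M' j = 0" if "j < n" for j
    proof -
      have "row P k \<bullet> col M' j = (P * M') $$ (k, j)" using P M' k that by simp
      then show ?thesis unfolding \<phi>_def PM' using P M' k that by simp
    qed
    show "\<phi> \<bullet> c = 1"
      unfolding \<phi>_def using P c k by simp
  qed
qed

lemma left_inverse_extend:
  fixes M :: "'a::comm_ring_1 mat"
  assumes M: "M \<in> carrier_mat m (Suc n)"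
    and Z': "Z' \<in> carrier_mat n m"
      "\<And>i j. i < n \<Longrightarrow> j < n \<Longrightarrow> row Z' i \<bullet> col M j = (if i = j then 1 else 0)"
    and \<phi>: "\<phi> \<in> carrier_vec m" "\<And>j. j < n \<Longrightarrow> \<phi> \<bullet> col M j = 0" "\<phi> \<bullet> col M n = 1"
  shows "mat_of_rows m
      (map (\<lambda>i. if i < n then row Z' i - (row Z' i \<bullet> col M n) \<cdot>\<^sub>v \<phi> else \<phi>) [0..<Suc n]) * M
    = 1\<^sub>m (Suc n)" (is "?Z * M = _")
proof (rule eq_matI)
  fix i j assume "i < dim_row (1\<^sub>m (Suc n) :: 'a mat)" "j < dim_col (1\<^sub>m (Suc n) :: 'a mat)"
  then have i: "i < Suc n" and j: "j < Suc n" by auto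
  have cols: "col M l \<in> carrier_vec m" for l using col_dim[of M l] M by simp
  have rows: "row Z' l \<in> carrier_vec m" if "l < n" for l using Z' that by simp
  have row_Z: "row ?Z i = (if i < n then row Z' i - (row Z' i \<bullet> col M n) \<cdot>\<^sub>v \<phi> else \<phi>)"
    using i rows \<phi>(1) by (subst mat_of_rows_row) (auto simp del: upt_Suc)
  have "(?Z * M) $$ (i, j) = row ?Z i \<bullet> col M j" using M i j by simp
  also have "\<dots> = (if i < n then row Z' i \<bullet> col M j - (row Z' i \<bullet> col M n) * (\<phi> \<bullet> col M j)
      else \<phi> \<bullet> col M j)"
    unfolding row_Z using i \<phi>(1) rows cols by (simp add: minus_scalar_prod_distrib[of _ m])
  also have "\<dots> = 1\<^sub>m (Suc n) $$ (i, j)"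
    using i j Z'(2) \<phi>(2,3) by (auto simp: less_Suc_eq)
  finally show "(?Z * M) $$ (i, j) = 1\<^sub>m (Suc n) $$ (i, j)" .
qed (use M in auto)

lemma mat_kernel_trivial_drop_last_col:
  fixes M :: "'a::comm_ring_1 mat"
  assumes M: "M \<in> carrier_mat m (Suc n)" and ker: "mat_kernel M = {0\<^sub>v (Suc n)}"
  shows "mat_kernel (mat m n (\<lambda>(i, j). M $$ (i, j))) = {0\<^sub>v n}"
  unfolding mat_kernel_trivial_iff[OF mat_carrier]
proof (intro ballI impI)
  fix w assume w: "w \<in> carrier_vec n" and "mat m n (\<lambda>(i, j). M $$ (i, j)) *\<^sub>v w = 0\<^sub>v m"
  moreover have "0 \<cdot>\<^sub>v col M n = 0\<^sub>v m" using M by (auto simp: vec_eq_iff)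
  ultimately have "M *\<^sub>v vec (Suc n) (\<lambda>j. if j < n then w $ j else 0) = 0\<^sub>v m"
    using mult_mat_vec_extend[OF M w, of 0] by simp
  then have z: "vec (Suc n) (\<lambda>j. if j < n then w $ j else 0) = 0\<^sub>v (Suc n)"
    using ker M by (simp add: mat_kernel_trivial_iff)
  have "w $ i = 0" if "i < n" for i
    using arg_cong[OF z, of "\<lambda>v. v $ i"] that by simp
  then show "w = 0\<^sub>v n" using w by (intro eq_vecI) auto
qed

lemma last_col_notin_range_drop_last_col:
  fixes M :: "'a::comm_ring_1 mat"
  assumes M: "M \<in> carrier_mat m (Suc n)" and ker: "mat_kernel M = {0\<^sub>v (Suc n)}"
    and w: "w \<in> carrier_vec n"
  shows "col M n \<noteq> mat m n (\<lambda>(i, j). M $$ (i, j)) *\<^sub>v w"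
proof
  assume c_old: "col M n = mat m n (\<lambda>(i, j). M $$ (i, j)) *\<^sub>v w"
  have "mat m n (\<lambda>(i, j). M $$ (i, j)) *\<^sub>v w + (- 1) \<cdot>\<^sub>v col M n = 0\<^sub>v m"
    using M w by (subst c_old) (auto simp: vec_eq_iff)
  then have z: "vec (Suc n) (\<lambda>j. if j < n then w $ j else - 1) = 0\<^sub>v (Suc n)"
    using mult_mat_vec_extend[OF M w, of "- 1"] ker M by (simp add: mat_kernel_trivial_iff)
  show False using arg_cong[OF z, of "\<lambda>v. v $ n"] by simp
qed

lemma left_inverse_of_mat_kernel_trivial:
  fixes M :: "'a::field mat"
  assumes "M \<in> carrier_mat m n" and "mat_kernel M = {0\<^sub>v n}"
  shows "\<exists>Z\<in>carrier_mat n m. Z * M = 1\<^sub>m n"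
  using assms
proof (induction n arbitrary: M)
  case 0
  then show ?case by (intro bexI[of _ "0\<^sub>m 0 m"] eq_matI) auto
next
  case (Suc n)
  note M = Suc.prems(1)
  define M' where "M' = mat m n (\<lambda>(i, j). M $$ (i, j))"
  have M': "M' \<in> carrier_mat m n" unfolding M'_def by simp
  have c: "col M n \<in> carrier_vec m" using col_dim[of M n] M by simp
  have col_M': "col M' j = col M j" if "j < n" for j
    unfolding M'_def using M that by (auto simp: col_def)
  obtain Z' where Z': "Z' \<in> carrier_mat n m" "Z' * M' = 1\<^sub>m n"
    using Suc.IH[OF M'] mat_kernel_trivial_drop_last_col[OF Suc.prems] unfolding M'_def by blast
  have "col M n \<noteq> M' *\<^sub>v (Z' *\<^sub>v col M n)"
    unfolding M'_def using Z' c by (intro last_col_notin_range_drop_last_col[OF Suc.prems]) simp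
  then obtain \<phi> where \<phi>: "\<phi> \<in> carrier_vec m" "\<And>j. j < n \<Longrightarrow> \<phi> \<bullet> col M' j = 0" "\<phi> \<bullet> col M n = 1"
    using separating_row_vec[OF M' Z' c] by blast
  have "row Z' i \<bullet> col M j = (if i = j then 1 else 0)" if "i < n" "j < n" for i j
    using arg_cong[OF Z'(2), of "\<lambda>X. X $$ (i, j)"] M' Z'(1) that by (simp add: col_M')
  then show ?case
    using left_inverse_extend[OF M Z'(1) _ \<phi>(1)] \<phi>(2,3) col_M' M by (auto intro!: bexI)
qed

lemma mat_range_eq_col_space:
  fixes M :: "'a::field mat"
  assumes "M \<in> carrier_mat m n"
  shows "mat_range M = vec_space.col_space m M"
  unfolding vec_space.col_space_eq[OF assms] mat_range_def using assms by auto

lemma mult_mat_vec_linear_map: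
  fixes M :: "'a::field mat"
  assumes M: "M \<in> carrier_mat m n"
  shows "linear_map class_ring (module_vec TYPE('a) n) (module_vec TYPE('a) m) (\<lambda>v. M *\<^sub>v v)"
proof (auto simp add: linear_map_def vec_vs)
  show "mod_hom class_ring (module_vec TYPE('a) n) (module_vec TYPE('a) m) (\<lambda>v. M *\<^sub>v v)"
    using M by (auto intro!: mod_hom.intro vec_module
        simp: mod_hom_axioms_def LinearCombinations.module_hom_def module_vec_simps
          mult_add_distrib_mat_vec mult_mat_vec)
qed

lemma rank_nullity_mat:
  fixes M :: "'a::field mat"
  assumes M: "M \<in> carrier_mat m n"
  shows "vec_space.rank m M + kernel_dim M = n"
proof -
  interpret linear_map class_ring "module_vec TYPE('a) n" "module_vec TYPE('a) m" "\<lambda>v. M *\<^sub>v v"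
    by (rule mult_mat_vec_linear_map[OF M])
  have "im = vec_space.col_space m M"
    using M by (auto simp: im_def module_vec_simps vec_space.col_space_eq[OF M])
  moreover have "ker = mat_kernel M"
    using M by (simp add: ker_def mat_kernel_def module_vec_simps)
  ultimately show ?thesis
    using rank_nullity[OF vec_space.fin_dim] M
    by (simp add: vec_space.rank_def vec_space.col_space_def vec_space.dim_is_n kernel_dim_def)
qed

lemma kernel_dim_eq_rank_of_mat_kernel_eq_range:
  fixes E D :: "'a::field mat"
  assumes E: "E \<in> carrier_mat p t" and D: "D \<in> carrier_mat t k" and "mat_kernel E = mat_range D"
  shows "kernel_dim E = vec_space.rank t D"
proof -
  have "kernel_dim E = vectorspace.dim class_ring ((module_vec TYPE('a) t)\<lparr>carrier := mat_kernel E\<rparr>)"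
    unfolding kernel_dim_def using E by simp
  also have "mat_kernel E = LinearCombinations.module.span class_ring (module_vec TYPE('a) t) (set (cols D))"
    unfolding assms(3) mat_range_eq_col_space[OF D] vec_space.col_space_def ..
  finally show ?thesis unfolding vec_space.rank_def .
qed

lemma rank_eq_dim_col_of_mat_kernel_trivial:
  fixes M :: "'a::field mat"
  assumes M: "M \<in> carrier_mat m n" and "mat_kernel M = {0\<^sub>v n}"
  shows "vec_space.rank m M = n"
proof -
  have "mat_kernel M = mat_range (0\<^sub>m n 0 :: 'a mat)"
  proof -
    have "0\<^sub>m n 0 *\<^sub>v v = 0\<^sub>v n" if "v \<in> carrier_vec 0" for v :: "'a vec"
      using that by (intro eq_vecI) (auto simp: scalar_prod_def)
    then show ?thesis
      unfolding assms(2) mat_range_def by (auto intro!: image_eqI[of _ _ "0\<^sub>v 0"])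
  qed
  then have "kernel_dim M = vec_space.rank n (0\<^sub>m n 0 :: 'a mat)"
    by (rule kernel_dim_eq_rank_of_mat_kernel_eq_range[OF M zero_carrier_mat])
  then have "kernel_dim M = 0"
    by (simp add: vec_space.rank_0I)
  then show ?thesis using rank_nullity_mat[OF M] by simp
qed

lemma rank_eq_dim_row_of_mat_range:
  fixes M :: "'a::field mat"
  assumes M: "M \<in> carrier_mat m n" and "mat_range M = carrier_vec m"
  shows "vec_space.rank m M = m"
proof -
  have "LinearCombinations.module.span class_ring (module_vec TYPE('a) m) (set (cols M)) = carrier_vec m"
    using assms(2) unfolding mat_range_eq_col_space[OF M] vec_space.col_space_def .
  then show ?thesis
    unfolding vec_space.rank_def by (simp add: module_vec_def vec_space.dim_is_n[unfolded module_vec_def])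
qed

lemma rank_add_rank_transpose_of_exact:
  fixes E D :: "'a::field mat"
  assumes E: "E \<in> carrier_mat p t" and D: "D \<in> carrier_mat t k"
    and D_inj: "mat_kernel D = {0\<^sub>v k}" and exact: "mat_kernel E = mat_range D"
  shows "vec_space.rank p E + vec_space.rank k (transpose_mat D) = t"
proof -
  obtain Z where Z: "Z \<in> carrier_mat k t" "Z * D = 1\<^sub>m k"
    using left_inverse_of_mat_kernel_trivial[OF D D_inj] by blast
  have "transpose_mat D * transpose_mat Z = 1\<^sub>m k"
    using transpose_mult[OF Z(1) D] Z(2) by simp
  then have "mat_range (transpose_mat D) = carrier_vec k"
    using D Z by (intro mat_range_eq_carrier_of_right_inverse[of _ k t "transpose_mat Z"]) auto
  then have "vec_space.rank k (transpose_mat D) = k"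
    using D by (intro rank_eq_dim_row_of_mat_range) auto
  moreover have "kernel_dim E = k"
    using kernel_dim_eq_rank_of_mat_kernel_eq_range[OF E D exact]
      rank_eq_dim_col_of_mat_kernel_trivial[OF D D_inj] by simp
  ultimately show ?thesis using rank_nullity_mat[OF E] by simp
qed

section \<open>Left inverses over the group algebra\<close>

definition gr_adjoint :: "('f::field, 'n::{finite,ab_group_add}) group_ring mat \<Rightarrow> ('f, 'n) group_ring mat" where
  "gr_adjoint M = mat (dim_col M) (dim_row M) (\<lambda>(i, j). gr_conj (M $$ (j, i)))"

lemma gr_adjoint_carrier: "M \<in> carrier_mat r c \<Longrightarrow> gr_adjoint M \<in> carrier_mat c r"
  unfolding gr_adjoint_def by auto

lemma gr_adjoint_adjoint[simp]: "gr_adjoint (gr_adjoint M) = M"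
  unfolding gr_adjoint_def by (rule eq_matI) auto

lemma gr_adjoint_one[simp]: "gr_adjoint (1\<^sub>m n) = 1\<^sub>m n"
  unfolding gr_adjoint_def by (rule eq_matI) auto

lemma gr_adjoint_mult:
  assumes "X \<in> carrier_mat r k" "Y \<in> carrier_mat k c"
  shows "gr_adjoint (X * Y) = gr_adjoint Y * gr_adjoint X"
  using assms unfolding gr_adjoint_def
  by (intro eq_matI) (auto simp: scalar_prod_def gr_conj_sum gr_conj_mult mult.commute)

lemma transpose_lift_gr: "transpose_mat (lift_gr M) = lift_gr (gr_adjoint M)"
proof (rule eq_matI)
  let ?N = "CARD('b)"
  fix s t assume "s < dim_row (lift_gr (gr_adjoint M))" "t < dim_col (lift_gr (gr_adjoint M))"
  then have s: "s < dim_col M * ?N" and t: "t < dim_row M * ?N"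
    by (simp_all add: lift_gr_def lift_mat_def gr_adjoint_def)
  have M: "M \<in> carrier_mat (dim_row M) (dim_col M)" by simp
  obtain i a where i: "s = i * ?N + a" "i < dim_col M" "a < ?N"
    using less_mult_obtain_div_mod[OF s] .
  obtain j b where j: "t = j * ?N + b" "j < dim_row M" "b < ?N"
    using less_mult_obtain_div_mod[OF t] .
  show "transpose_mat (lift_gr M) $$ (s, t) = lift_gr (gr_adjoint M) $$ (s, t)"
    using s t i j index_lift_gr[OF M] index_lift_gr[OF gr_adjoint_carrier[OF M]] lift_gr_carrier[OF M]
    by (simp add: gr_adjoint_def gr_conj_def)
qed (simp_all add: lift_gr_def lift_mat_def gr_adjoint_def)

lemma left_inverse_of_lift_gr_kernel_trivial:
  fixes B :: "('f::field, 'n::{finite,ab_group_add}) group_ring mat"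
  assumes B: "B \<in> carrier_mat q b" and ker: "mat_kernel (lift_gr B) = {0\<^sub>v (b * CARD('n))}"
  obtains Q where "Q \<in> carrier_mat b q" "Q * B = 1\<^sub>m b"
proof -
  obtain Zf where Zf: "Zf \<in> carrier_mat (b * CARD('n)) (q * CARD('n))" "Zf * lift_gr B = 1\<^sub>m (b * CARD('n))"
    using left_inverse_of_mat_kernel_trivial[OF lift_gr_carrier[OF B] ker] by blast
  have "lift_gr (gr_adjoint B) * transpose_mat Zf = 1\<^sub>m (b * CARD('n))"
    using transpose_mult[OF Zf(1) lift_gr_carrier[OF B]] Zf(2) by (simp add: transpose_lift_gr)
  then have "mat_range (lift_gr (gr_adjoint B)) = carrier_vec (b * CARD('n))"
    using Zf(1) lift_gr_carrier[OF gr_adjoint_carrier[OF B]]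
    by (intro mat_range_eq_carrier_of_right_inverse[of _ _ "q * CARD('n)" "transpose_mat Zf"]) auto
  then have "mat_range (gr_adjoint B) = carrier_vec b"
    by (rule mat_range_eq_carrier_of_lift_gr[OF gr_adjoint_carrier[OF B]])
  then obtain Z where Z: "Z \<in> carrier_mat q b" "gr_adjoint B * Z = 1\<^sub>m b"
    using right_inverse_of_mat_range[OF gr_adjoint_carrier[OF B]] by blast
  show ?thesis
  proof
    show "gr_adjoint Z \<in> carrier_mat b q" using gr_adjoint_carrier[OF Z(1)] .
    show "gr_adjoint Z * B = 1\<^sub>m b"
      using gr_adjoint_mult[OF gr_adjoint_carrier[OF B] Z(1)] Z(2) by simp
  qed
qed

section \<open>The lifted-product complex over a commutative ring\<close>

definition kron :: "'a::comm_ring_1 mat \<Rightarrow> 'a mat \<Rightarrow> 'a mat" where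
  "kron X Y = mat (dim_row X * dim_row Y) (dim_col X * dim_col Y)
     (\<lambda>(i, j). X $$ (i div dim_row Y, j div dim_col Y) * Y $$ (i mod dim_row Y, j mod dim_col Y))"

definition vec_to_mat :: "nat \<Rightarrow> nat \<Rightarrow> 'a vec \<Rightarrow> 'a mat" where
  "vec_to_mat r c v = mat r c (\<lambda>(i, j). v $ (i * c + j))"

definition mat_to_vec :: "'a mat \<Rightarrow> 'a vec" where
  "mat_to_vec W = vec (dim_row W * dim_col W) (\<lambda>k. W $$ (k div dim_col W, k mod dim_col W))"

lemma dim_kron[simp]: "dim_row (kron X Y) = dim_row X * dim_row Y" "dim_col (kron X Y) = dim_col X * dim_col Y"
  unfolding kron_def by auto

lemma dim_vec_to_mat[simp]: "dim_row (vec_to_mat r c v) = r" "dim_col (vec_to_mat r c v) = c"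
  unfolding vec_to_mat_def by auto

lemma kron_carrier[simp]:
  "X \<in> carrier_mat r1 c1 \<Longrightarrow> Y \<in> carrier_mat r2 c2 \<Longrightarrow> kron X Y \<in> carrier_mat (r1 * r2) (c1 * c2)"
  unfolding kron_def by auto

lemma vec_to_mat_carrier[simp]: "vec_to_mat r c v \<in> carrier_mat r c"
  unfolding vec_to_mat_def by auto

lemma mat_to_vec_carrier[simp]: "W \<in> carrier_mat r c \<Longrightarrow> mat_to_vec W \<in> carrier_vec (r * c)"
  unfolding mat_to_vec_def by auto

lemma vec_to_mat_mat_to_vec[simp]: "W \<in> carrier_mat r c \<Longrightarrow> vec_to_mat r c (mat_to_vec W) = W"
  unfolding vec_to_mat_def mat_to_vec_def by (rule eq_matI) (auto simp: mult_add_less_mult)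

lemma mat_to_vec_vec_to_mat[simp]: "v \<in> carrier_vec (r * c) \<Longrightarrow> mat_to_vec (vec_to_mat r c v) = v"
  unfolding vec_to_mat_def mat_to_vec_def
  by (rule eq_vecI) (auto elim!: less_mult_obtain_div_mod)

lemma mat_to_vec_inj:
  "W \<in> carrier_mat r c \<Longrightarrow> V \<in> carrier_mat r c \<Longrightarrow> mat_to_vec W = mat_to_vec V \<Longrightarrow> W = V"
  by (metis vec_to_mat_mat_to_vec)

lemma mat_to_vec_add:
  "W \<in> carrier_mat r c \<Longrightarrow> V \<in> carrier_mat r c \<Longrightarrow> mat_to_vec (W + V) = mat_to_vec W + mat_to_vec V"
  unfolding mat_to_vec_def by (rule eq_vecI) (auto elim!: less_mult_obtain_div_mod)

lemma mat_to_vec_uminus: "W \<in> carrier_mat r c \<Longrightarrow> mat_to_vec (- W) = - mat_to_vec W"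
  unfolding mat_to_vec_def by (rule eq_vecI) (auto elim!: less_mult_obtain_div_mod)

lemma mat_to_vec_zero[simp]: "mat_to_vec (0\<^sub>m r c :: 'a::zero mat) = 0\<^sub>v (r * c)"
  unfolding mat_to_vec_def by (rule eq_vecI) (auto elim!: less_mult_obtain_div_mod)

lemma kron_mult_vec:
  assumes X: "X \<in> carrier_mat r1 c1" and Y: "Y \<in> carrier_mat r2 c2" and v: "v \<in> carrier_vec (c1 * c2)"
  shows "kron X Y *\<^sub>v v = mat_to_vec (X * vec_to_mat c1 c2 v * transpose_mat Y)"
proof (rule eq_vecI)
  fix k assume "k < dim_vec (mat_to_vec (X * vec_to_mat c1 c2 v * transpose_mat Y))"
  then have "k < r1 * r2" using X Y by (simp add: mat_to_vec_def)
  then obtain i1 i2 where k: "k = i1 * r2 + i2" and i1: "i1 < r1" and i2: "i2 < r2"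
    by (rule less_mult_obtain_div_mod)
  have "(kron X Y *\<^sub>v v) $ k = (\<Sum>t<c1 * c2. X $$ (i1, t div c2) * Y $$ (i2, t mod c2) * v $ t)"
    using X Y v i1 i2 unfolding k kron_def by (simp add: scalar_prod_def atLeast0LessThan mult_add_less_mult)
  also have "\<dots> = (\<Sum>k1<c1. \<Sum>k2<c2. X $$ (i1, k1) * Y $$ (i2, k2) * v $ (k1 * c2 + k2))"
    unfolding sum_lessThan_mult by (intro sum.cong refl) auto
  also have "\<dots> = (\<Sum>k2<c2. \<Sum>k1<c1. X $$ (i1, k1) * v $ (k1 * c2 + k2) * Y $$ (i2, k2))"
    by (subst sum.swap) (intro sum.cong refl, simp add: ac_simps)
  also have "\<dots> = (\<Sum>k2<c2. (\<Sum>k1<c1. X $$ (i1, k1) * v $ (k1 * c2 + k2)) * Y $$ (i2, k2))"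
    by (simp add: sum_distrib_right)
  also have "\<dots> = (X * vec_to_mat c1 c2 v * transpose_mat Y) $$ (i1, i2)"
    using X Y i1 i2 by (simp add: scalar_prod_def vec_to_mat_def atLeast0LessThan)
  also have "\<dots> = mat_to_vec (X * vec_to_mat c1 c2 v * transpose_mat Y) $ k"
    using X Y i1 i2 unfolding k mat_to_vec_def by (simp add: mult_add_less_mult)
  finally show "(kron X Y *\<^sub>v v) $ k = mat_to_vec (X * vec_to_mat c1 c2 v * transpose_mat Y) $ k" .
qed (use X Y in \<open>simp add: kron_def mat_to_vec_def\<close>)

lemma hcat_carrier: "X \<in> carrier_mat r c1 \<Longrightarrow> Y \<in> carrier_mat r c2 \<Longrightarrow> hcat X Y \<in> carrier_mat r (c1 + c2)"
  unfolding hcat_def by auto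

lemma vcat_carrier: "X \<in> carrier_mat r1 c \<Longrightarrow> Y \<in> carrier_mat r2 c \<Longrightarrow> vcat X Y \<in> carrier_mat (r1 + r2) c"
  unfolding vcat_def by auto

lemma hcat_mult_vec:
  assumes X: "X \<in> carrier_mat r c1" and Y: "Y \<in> carrier_mat r c2" and x: "x \<in> carrier_vec (c1 + c2)"
  shows "hcat X Y *\<^sub>v x = X *\<^sub>v vec_first x c1 + Y *\<^sub>v vec_last x c2"
proof (rule eq_vecI)
  fix i assume "i < dim_vec (X *\<^sub>v vec_first x c1 + Y *\<^sub>v vec_last x c2)"
  then have i: "i < r" using X Y by simp
  have "row (hcat X Y) i = row X i @\<^sub>v row Y i"
    using X Y i unfolding hcat_def by (intro eq_vecI) auto
  then have "(hcat X Y *\<^sub>v x) $ i = (row X i @\<^sub>v row Y i) \<bullet> (vec_first x c1 @\<^sub>v vec_last x c2)"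
    using X Y x i by (simp add: hcat_def)
  also have "\<dots> = row X i \<bullet> vec_first x c1 + row Y i \<bullet> vec_last x c2"
    by (rule scalar_prod_append[of _ c1 _ c2]) (use X Y i in auto)
  finally show "(hcat X Y *\<^sub>v x) $ i = (X *\<^sub>v vec_first x c1 + Y *\<^sub>v vec_last x c2) $ i"
    using X Y i by simp
qed (use X Y in \<open>simp add: hcat_def\<close>)

lemma vcat_mult_vec:
  assumes X: "X \<in> carrier_mat r1 c" and Y: "Y \<in> carrier_mat r2 c"
  shows "vcat X Y *\<^sub>v w = (X *\<^sub>v w) @\<^sub>v (Y *\<^sub>v w)"
proof (rule eq_vecI)
  fix i assume "i < dim_vec ((X *\<^sub>v w) @\<^sub>v (Y *\<^sub>v w))"
  then have i: "i < r1 + r2" using X Y by simp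
  have "row (vcat X Y) i = (if i < r1 then row X i else row Y (i - r1))"
    using X Y i unfolding vcat_def by (intro eq_vecI) auto
  then show "(vcat X Y *\<^sub>v w) $ i = ((X *\<^sub>v w) @\<^sub>v (Y *\<^sub>v w)) $ i"
    using X Y i by (simp add: vcat_def)
qed (use X Y in \<open>simp add: vcat_def\<close>)

lemma vec_first_append: "v \<in> carrier_vec n \<Longrightarrow> vec_first (v @\<^sub>v w) n = v"
  unfolding vec_first_def by (rule eq_vecI) auto

lemma vec_last_append: "v \<in> carrier_vec n \<Longrightarrow> w \<in> carrier_vec m \<Longrightarrow> vec_last (v @\<^sub>v w) m = w"
  unfolding vec_last_def by (rule eq_vecI) auto

definition lp_HX_ring :: "'a::comm_ring_1 mat \<Rightarrow> 'a mat \<Rightarrow> 'a mat" where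
  "lp_HX_ring A B = hcat (kron A (1\<^sub>m (dim_row B))) (kron (1\<^sub>m (dim_row A)) B)"

definition lp_HZT_ring :: "'a::comm_ring_1 mat \<Rightarrow> 'a mat \<Rightarrow> 'a mat" where
  "lp_HZT_ring A B = vcat (kron (1\<^sub>m (dim_col A)) B) (- kron A (1\<^sub>m (dim_col B)))"

context
  fixes A B :: "'a::comm_ring_1 mat" and a b p q :: nat
  assumes A: "A \<in> carrier_mat p a" and B: "B \<in> carrier_mat q b"
begin

lemma lp_HX_ring_eq: "lp_HX_ring A B = hcat (kron A (1\<^sub>m q)) (kron (1\<^sub>m p) B)"
  unfolding lp_HX_ring_def using A B by auto

lemma lp_HZT_ring_eq: "lp_HZT_ring A B = vcat (kron (1\<^sub>m a) B) (- kron A (1\<^sub>m b))"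
  unfolding lp_HZT_ring_def using A B by auto

lemma lp_HX_ring_carrier: "lp_HX_ring A B \<in> carrier_mat (p * q) (a * q + p * b)"
  unfolding lp_HX_ring_eq using A B by (intro hcat_carrier kron_carrier) auto

lemma lp_HZT_ring_carrier: "lp_HZT_ring A B \<in> carrier_mat (a * q + p * b) (a * b)"
  unfolding lp_HZT_ring_eq using A B by (intro vcat_carrier uminus_carrier_mat kron_carrier) auto

lemma lp_HZT_ring_mult_vec:
  assumes w: "w \<in> carrier_vec (a * b)"
  shows "lp_HZT_ring A B *\<^sub>v w
    = mat_to_vec (vec_to_mat a b w * transpose_mat B) @\<^sub>v - mat_to_vec (A * vec_to_mat a b w)"
proof -
  have "lp_HZT_ring A B *\<^sub>v w = (kron (1\<^sub>m a) B *\<^sub>v w) @\<^sub>v (- kron A (1\<^sub>m b) *\<^sub>v w)"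
    unfolding lp_HZT_ring_eq using A B by (intro vcat_mult_vec[of _ "a * q" "a * b" _ "p * b"]) auto
  also have "kron (1\<^sub>m a) B *\<^sub>v w = mat_to_vec (vec_to_mat a b w * transpose_mat B)"
    using kron_mult_vec[OF one_carrier_mat B w] by simp
  also have "- kron A (1\<^sub>m b) *\<^sub>v w = - mat_to_vec (A * vec_to_mat a b w)"
    using kron_mult_vec[OF A one_carrier_mat w] A w by (simp add: uminus_mult_mat_vec)
  finally show ?thesis .
qed

lemma lp_HX_ring_mult_vec:
  assumes x: "x \<in> carrier_vec (a * q + p * b)"
  shows "lp_HX_ring A B *\<^sub>v x
    = mat_to_vec (A * vec_to_mat a q (vec_first x (a * q)) + vec_to_mat p b (vec_last x (p * b)) * transpose_mat B)"
proof -
  have "lp_HX_ring A B *\<^sub>v x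
      = kron A (1\<^sub>m q) *\<^sub>v vec_first x (a * q) + kron (1\<^sub>m p) B *\<^sub>v vec_last x (p * b)"
    unfolding lp_HX_ring_eq using A B by (intro hcat_mult_vec[of _ "p * q" "a * q" _ "p * b", OF _ _ x]) auto
  also have "\<dots> = mat_to_vec (A * vec_to_mat a q (vec_first x (a * q)))
      + mat_to_vec (vec_to_mat p b (vec_last x (p * b)) * transpose_mat B)"
    using kron_mult_vec[OF A one_carrier_mat vec_first_carrier]
      kron_mult_vec[OF one_carrier_mat B vec_last_carrier] A by simp
  also have "\<dots> = mat_to_vec (A * vec_to_mat a q (vec_first x (a * q)) + vec_to_mat p b (vec_last x (p * b)) * transpose_mat B)"
    by (rule mat_to_vec_add[symmetric]) (use A B in auto)
  finally show ?thesis .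
qed

lemma lp_HX_ring_mult_lp_HZT_ring:
  assumes w: "w \<in> carrier_vec (a * b)"
  shows "lp_HX_ring A B *\<^sub>v (lp_HZT_ring A B *\<^sub>v w) = 0\<^sub>v (p * q)"
proof -
  define W where "W = vec_to_mat a b w"
  have W: "W \<in> carrier_mat a b" unfolding W_def by simp
  have c1: "mat_to_vec (W * transpose_mat B) \<in> carrier_vec (a * q)" using W B by simp
  have c2: "- mat_to_vec (A * W) \<in> carrier_vec (p * b)" using W A by simp
  have Dw: "lp_HZT_ring A B *\<^sub>v w = mat_to_vec (W * transpose_mat B) @\<^sub>v - mat_to_vec (A * W)"
    unfolding W_def by (rule lp_HZT_ring_mult_vec[OF w])
  have x: "lp_HZT_ring A B *\<^sub>v w \<in> carrier_vec (a * q + p * b)" using Dw c1 c2 by simp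
  have first: "vec_to_mat a q (vec_first (lp_HZT_ring A B *\<^sub>v w) (a * q)) = W * transpose_mat B"
    using Dw c1 W B by (simp add: vec_first_append)
  have last: "vec_to_mat p b (vec_last (lp_HZT_ring A B *\<^sub>v w) (p * b)) = - (A * W)"
    using Dw c1 c2 A W mat_to_vec_uminus[of "A * W" p b, symmetric] by (simp add: vec_last_append)
  have "- (A * W) * transpose_mat B = - (A * (W * transpose_mat B))"
    using A W B by (simp add: uminus_mult_left_mat)
  then have "lp_HX_ring A B *\<^sub>v (lp_HZT_ring A B *\<^sub>v w)
      = mat_to_vec (A * (W * transpose_mat B) + - (A * (W * transpose_mat B)))"
    unfolding lp_HX_ring_mult_vec[OF x] first last by simp
  also have "A * (W * transpose_mat B) + - (A * (W * transpose_mat B)) = 0\<^sub>m p q"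
    using A W B by (intro eq_matI) auto
  finally show ?thesis by simp
qed

lemma mat_kernel_lp_HZT_ring:
  assumes Q: "Q \<in> carrier_mat b q" and QB: "Q * B = 1\<^sub>m b"
  shows "mat_kernel (lp_HZT_ring A B) = {0\<^sub>v (a * b)}"
  unfolding mat_kernel_trivial_iff[OF lp_HZT_ring_carrier]
proof (intro ballI impI)
  fix w assume w: "w \<in> carrier_vec (a * b)" and z: "lp_HZT_ring A B *\<^sub>v w = 0\<^sub>v (a * q + p * b)"
  define W where "W = vec_to_mat a b w"
  have W: "W \<in> carrier_mat a b" unfolding W_def by simp
  have c1: "mat_to_vec (W * transpose_mat B) \<in> carrier_vec (a * q)" using W B by simp
  have "mat_to_vec (W * transpose_mat B) = vec_first (lp_HZT_ring A B *\<^sub>v w) (a * q)"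
    using lp_HZT_ring_mult_vec[OF w] vec_first_append[OF c1] unfolding W_def by simp
  also have "\<dots> = mat_to_vec (0\<^sub>m a q)" unfolding z by (auto simp: vec_first_def)
  finally have WB: "W * transpose_mat B = 0\<^sub>m a q"
    using W B by (intro mat_to_vec_inj[of _ a q]) auto
  have "W = W * transpose_mat (Q * B)" using W QB by simp
  also have "\<dots> = (W * transpose_mat B) * transpose_mat Q"
    using W B Q by (simp add: transpose_mult[OF Q B])
  also have "\<dots> = 0\<^sub>m a b" unfolding WB using Q by simp
  finally show "w = 0\<^sub>v (a * b)" using w unfolding W_def by (metis mat_to_vec_vec_to_mat mat_to_vec_zero)
qed

lemma sylvester_eq_zero_parametrization:
  assumes Q: "Q \<in> carrier_mat b q" and QB: "Q * B = 1\<^sub>m b" and A_inj: "mat_kernel A = {0\<^sub>v a}"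
    and U: "U \<in> carrier_mat a q" and V: "V \<in> carrier_mat p b"
    and eq: "A * U + V * transpose_mat B = 0\<^sub>m p q"
  shows "U = (U * transpose_mat Q) * transpose_mat B" and "V = - (A * (U * transpose_mat Q))"
proof -
  define W where "W = U * transpose_mat Q"
  have W: "W \<in> carrier_mat a b" unfolding W_def using U Q by simp
  have VB: "V * transpose_mat B = - (A * U)"
    using eq A U V B by (intro add_eq_zero_mat_imp_eq_uminus) auto
  have "V = V * transpose_mat (Q * B)" using V QB by simp
  also have "\<dots> = (V * transpose_mat B) * transpose_mat Q"
    using V B Q by (simp add: transpose_mult[OF Q B])
  also have "\<dots> = - (A * W)"
    unfolding VB W_def using A U Q by (simp add: uminus_mult_left_mat)
  finally have VW: "V = - (A * W)" .
  have "A * (W * transpose_mat B) = - V * transpose_mat B"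
    unfolding VW using A W B by (simp add: uminus_mult_left_mat)
  also have "\<dots> = A * U"
    using V B A U by (simp add: uminus_mult_left_mat VB)
  finally have "U = W * transpose_mat B"
    using mat_mult_left_cancel[OF A A_inj U, of "W * transpose_mat B"] W B by simp
  then show "U = (U * transpose_mat Q) * transpose_mat B" and "V = - (A * (U * transpose_mat Q))"
    using VW unfolding W_def by simp_all
qed

lemma mat_kernel_lp_HX_ring:
  assumes Q: "Q \<in> carrier_mat b q" and QB: "Q * B = 1\<^sub>m b" and A_inj: "mat_kernel A = {0\<^sub>v a}"
  shows "mat_kernel (lp_HX_ring A B) = mat_range (lp_HZT_ring A B)"
proof
  show "mat_range (lp_HZT_ring A B) \<subseteq> mat_kernel (lp_HX_ring A B)"
    using lp_HZT_ring_carrier lp_HX_ring_carrier lp_HX_ring_mult_lp_HZT_ring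
    unfolding mat_range_def by (auto intro!: mat_kernelI)
  show "mat_kernel (lp_HX_ring A B) \<subseteq> mat_range (lp_HZT_ring A B)"
  proof
    fix x assume "x \<in> mat_kernel (lp_HX_ring A B)"
    then have x: "x \<in> carrier_vec (a * q + p * b)" and z: "lp_HX_ring A B *\<^sub>v x = 0\<^sub>v (p * q)"
      using mat_kernelD[OF lp_HX_ring_carrier] by auto
    define U where "U = vec_to_mat a q (vec_first x (a * q))"
    define V where "V = vec_to_mat p b (vec_last x (p * b))"
    have U: "U \<in> carrier_mat a q" and V: "V \<in> carrier_mat p b" unfolding U_def V_def by simp_all
    have "A * U + V * transpose_mat B = 0\<^sub>m p q"
      using lp_HX_ring_mult_vec[OF x] z A U V B unfolding U_def V_def
      by (intro mat_to_vec_inj[of _ p q]) auto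
    note UV = sylvester_eq_zero_parametrization[OF Q QB A_inj U V this]
    define W where "W = U * transpose_mat Q"
    have W: "W \<in> carrier_mat a b" unfolding W_def using U Q by simp
    have "lp_HZT_ring A B *\<^sub>v mat_to_vec W = mat_to_vec U @\<^sub>v mat_to_vec V"
      unfolding lp_HZT_ring_mult_vec[OF mat_to_vec_carrier[OF W]] vec_to_mat_mat_to_vec[OF W]
      using UV mat_to_vec_uminus[of "A * W" p b] A W unfolding W_def by simp
    also have "\<dots> = x" using x unfolding U_def V_def by simp
    finally show "x \<in> mat_range (lp_HZT_ring A B)"
      using lp_HZT_ring_carrier W unfolding mat_range_def by (auto intro!: image_eqI[of _ _ "mat_to_vec W"])
  qed
qed

end

section \<open>The lifted-product code\<close>

lemma dim_ga_kron[simp]: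
  "dim_row (ga_kron X Y) = dim_row X * dim_row Y" "dim_col (ga_kron X Y) = dim_col X * dim_col Y"
  unfolding ga_kron_def by auto

lemma dim_ga_id[simp]: "dim_row (ga_id m) = m" "dim_col (ga_id m) = m"
  unfolding ga_id_def by auto

lemma dim_ga_neg_mat[simp]: "dim_row (ga_neg_mat X) = dim_row X" "dim_col (ga_neg_mat X) = dim_col X"
  unfolding ga_neg_mat_def by auto

lemma map_GR_ga_kron: "map_mat GR (ga_kron X Y) = kron (map_mat GR X) (map_mat GR Y)"
  by (rule eq_matI) (auto simp: ga_kron_def kron_def times_group_ring_def elim!: less_mult_obtain_div_mod)

lemma map_GR_ga_id: "map_mat GR (ga_id m) = 1\<^sub>m m"
  by (rule eq_matI) (auto simp: ga_id_def one_group_ring_def zero_group_ring_def ga_zero_def)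

lemma map_GR_ga_neg_mat: "map_mat GR (ga_neg_mat X) = - map_mat GR X"
  by (rule eq_matI) (auto simp: ga_neg_mat_def uminus_group_ring_def ga_uminus_def)

lemma map_mat_hcat: "dim_row X = dim_row Y \<Longrightarrow> map_mat f (hcat X Y) = hcat (map_mat f X) (map_mat f Y)"
  by (rule eq_matI) (auto simp: hcat_def)

lemma map_mat_vcat: "dim_col X = dim_col Y \<Longrightarrow> map_mat f (vcat X Y) = vcat (map_mat f X) (map_mat f Y)"
  by (rule eq_matI) (auto simp: vcat_def)

lemma LP_HX_eq_lift_gr: "LP_HX A B = lift_gr (lp_HX_ring (map_mat GR A) (map_mat GR B))"
  unfolding LP_HX_def lift_mat_eq_lift_gr lp_HX_ring_def
  by (subst map_mat_hcat) (simp_all add: map_GR_ga_kron map_GR_ga_id)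

lemma LP_HZ_eq_lift_gr: "LP_HZ A B = transpose_mat (lift_gr (lp_HZT_ring (map_mat GR A) (map_mat GR B)))"
  unfolding LP_HZ_def lift_mat_eq_lift_gr lp_HZT_ring_def
  by (subst map_mat_vcat) (simp_all add: map_GR_ga_kron map_GR_ga_id map_GR_ga_neg_mat)

lemma frank_LP_HX_add_frank_LP_HZ:
  fixes A B :: "('f::field, 'n::{finite,ab_group_add}) grpalg mat"
  assumes A: "A \<in> carrier_mat rA nA" and B: "B \<in> carrier_mat rB nB"
    and inj: "mat_kernel (lp_HZT_ring (map_mat GR A) (map_mat GR B)) = {0\<^sub>v (nA * nB)}"
    and exact: "mat_kernel (lp_HX_ring (map_mat GR A) (map_mat GR B))
      = mat_range (lp_HZT_ring (map_mat GR A) (map_mat GR B))"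
  shows "frank (LP_HX A B) + frank (LP_HZ A B) = (nA * rB + rA * nB) * CARD('n)"
proof -
  have A': "map_mat GR A \<in> carrier_mat rA nA" and B': "map_mat GR B \<in> carrier_mat rB nB"
    using A B by auto
  note HX = lift_gr_carrier[OF lp_HX_ring_carrier[OF A' B']]
  note HZT = lift_gr_carrier[OF lp_HZT_ring_carrier[OF A' B']]
  have "mat_kernel (lift_gr (lp_HZT_ring (map_mat GR A) (map_mat GR B))) = {0\<^sub>v (nA * nB * CARD('n))}"
    using mat_kernel_lift_gr_trivial_iff[OF lp_HZT_ring_carrier[OF A' B']] inj by simp
  moreover have "mat_kernel (lift_gr (lp_HX_ring (map_mat GR A) (map_mat GR B)))
      = mat_range (lift_gr (lp_HZT_ring (map_mat GR A) (map_mat GR B)))"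
    using lp_HX_ring_carrier[OF A' B'] lp_HZT_ring_carrier[OF A' B'] exact
    by (rule mat_kernel_lift_gr_eq_range)
  ultimately show ?thesis
    unfolding frank_def LP_HX_eq_lift_gr LP_HZ_eq_lift_gr
    using rank_add_rank_transpose_of_exact[OF HX HZT] HX HZT by (simp add: algebra_simps)
qed

theorem mainTheorem11:
  fixes A B :: "('f::{field,finite}, 'n::{finite,ab_group_add}) grpalg mat"
    and rA nA rB nB :: nat
  assumes "A \<in> carrier_mat rA nA" and "B \<in> carrier_mat rB nB"
    and "mat_kernel (lift_mat A) = {0\<^sub>v (nA * CARD('n))}"
    and "mat_kernel (lift_mat B) = {0\<^sub>v (nB * CARD('n))}"
  shows "LP_dim A B = 0"
proof -
  have A': "map_mat GR A \<in> carrier_mat rA nA" and B': "map_mat GR B \<in> carrier_mat rB nB"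
    using assms(1,2) by auto
  have A_inj: "mat_kernel (map_mat GR A) = {0\<^sub>v nA}"
    using assms(3) mat_kernel_lift_gr_trivial_iff[OF A'] unfolding lift_mat_eq_lift_gr by simp
  obtain Q where Q: "Q \<in> carrier_mat nB rB" "Q * map_mat GR B = 1\<^sub>m nB"
    using left_inverse_of_lift_gr_kernel_trivial[OF B'] assms(4) unfolding lift_mat_eq_lift_gr by blast
  have "frank (LP_HX A B) + frank (LP_HZ A B) = (nA * rB + rA * nB) * CARD('n)"
    using frank_LP_HX_add_frank_LP_HZ[OF assms(1,2) mat_kernel_lp_HZT_ring[OF A' B' Q]
        mat_kernel_lp_HX_ring[OF A' B' Q A_inj]] .
  from arg_cong[OF this, of int] show ?thesis
    unfolding LP_dim_def using assms(1,2) by (simp add: algebra_simps)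
qed

end
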